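(* Let $F$ be a positive integer and $S$ an irreducible numerical semigroup with Frobenius number $F$. Define $S_0=S$ and, for $n\ge 0$, $S_{n+1}=(S_n\setminus\{\mathrm{m}(S_n)\})\cup\{F-\mathrm{m}(S_n)\}$ if $\mathrm{m}(S_n)<\frac{F}{2}$, and $S_{n+1}=S_n$ otherwise. Then every $S_n$ is an irreducible numerical semigroup with Frobenius number $F$, and if $k=\#\{s\in S: s<\frac{F}{2}\}-1$, then $S_{k+n}=\mathrm{C}(F)$ for all $n\in\mathbb{N}$.
   Context: A numerical semigroup is a subset $S\subseteq\mathbb{N}$ (with $\mathbb{N}$ the set of nonnegative integers) closed under addition, containing $0$, with $\mathbb{N}\setminus S$ finite. Its Frobenius number is the largest integer not in $S$; its multiplicity $\mathrm{m}(S)$ is the smallest positive integer in $S$. A numerical semigroup is irreducible if it cannot be expressed as the intersection of two numerical semigroups properly containing it. For a positive integer $F$, $\mathrm{C}(F)=\{0\}\cup\{z\in\mathbb{Z}: z\ge \lceil\frac{F+1}{2}\rceil\}\setminus\{F\}$ (i.e. $\{0\}\cup\{z\ge\frac{F+1}{2}\}\setminus\{F\}$ for $F$ odd and $\{0\}\cup\{z\ge \frac F2+1\}\setminus\{F\}$ for $F$ even). *)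

theory Defs
  imports Main
begin

definition numerical_semigroup :: "nat set \<Rightarrow> bool" where
  "numerical_semigroup S \<longleftrightarrow>
     0 \<in> S \<and> (\<forall>x\<in>S. \<forall>y\<in>S. x + y \<in> S) \<and> finite (UNIV - S)"

text \<open>Frobenius number: the largest natural number not in S (used only when
  UNIV - S is nonempty).\<close>
definition frobenius :: "nat set \<Rightarrow> nat" where
  "frobenius S = Max (UNIV - S)"

definition multiplicity :: "nat set \<Rightarrow> nat" where
  "multiplicity S = (LEAST x. x \<in> S \<and> 0 < x)"

definition irreducible_ns :: "nat set \<Rightarrow> bool" where
  "irreducible_ns S \<longleftrightarrow> numerical_semigroup S \<and>
     \<not> (\<exists>S1 S2. numerical_semigroup S1 \<and> numerical_semigroup S2 \<and>
            S \<subset> S1 \<and> S \<subset> S2 \<and> S = S1 \<inter> S2)"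

text \<open>C(F) = {0} \<union> {z. z \<ge> ceil((F+1)/2)} - {F}.  For natural z,
  z \<ge> (F+1)/2 iff 2*z \<ge> F+1.\<close>
definition C_set :: "nat \<Rightarrow> nat set" where
  "C_set F = ({0} \<union> {z. F + 1 \<le> 2 * z}) - {F}"

primrec seqS :: "nat \<Rightarrow> nat set \<Rightarrow> nat \<Rightarrow> nat set" where
  "seqS F S 0 = S"
| "seqS F S (Suc n) =
     (if 2 * multiplicity (seqS F S n) < F
      then (seqS F S n - {multiplicity (seqS F S n)}) \<union> {F - multiplicity (seqS F S n)}
      else seqS F S n)"

end

theory Submission
  imports Defs
begin

(* Call g a special gap of S if g is not in S but 2g and g + s (s in S, s > 0)
   are; then S \<union> {g} is again a numerical semigroup, and the largest element of T - S is a
   special gap whenever S \<subset> T.  Hence a numerical semigroup is irreducible iff it has at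
   most one special gap.  For an irreducible S with Frobenius number F this gives the
   "reflection property": F - x \<in> S for every gap x other than F and F/2 (the paper's
   characterization of symmetric and pseudo-symmetric semigroups), and conversely the
   reflection property forces irreducibility with Frobenius number F.
   One step of the sequence removes the multiplicity m < F/2 and adds the gap F - m; it
   preserves the reflection property and removes exactly one element from the set of
   "small" elements s \<in> S with 2s < F.  So the number of small elements drops by one until
   only 0 is left; a semigroup with the reflection property whose only small element is 0
   is C(F).  The main theorem follows by counting small elements along the sequence. *)

section \<open>Numerical semigroups and special gaps\<close>

lemma ns_zero: "numerical_semigroup S \<Longrightarrow> 0 \<in> S"
  by (simp add: numerical_semigroup_def)

lemma ns_add: "numerical_semigroup S \<Longrightarrow> x \<in> S \<Longrightarrow> y \<in> S \<Longrightarrow> x + y \<in> S"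
  by (simp add: numerical_semigroup_def)

lemma ns_finite_gaps: "numerical_semigroup S \<Longrightarrow> finite (UNIV - S)"
  by (simp add: numerical_semigroup_def)

lemma multiplicity_least:
  assumes "x \<in> S" "0 < x"
  shows "multiplicity S \<in> S" "0 < multiplicity S" "multiplicity S \<le> x"
proof -
  show "multiplicity S \<in> S" "0 < multiplicity S"
    unfolding multiplicity_def using LeastI[of "\<lambda>x. x \<in> S \<and> 0 < x" x] assms by auto
  show "multiplicity S \<le> x"
    unfolding multiplicity_def by (rule Least_le) (use assms in auto)
qed

lemma gap_le_frobenius:
  assumes "numerical_semigroup S" "x \<notin> S"
  shows "x \<le> frobenius S"
  unfolding frobenius_def using Max_ge[OF ns_finite_gaps[OF assms(1)]] assms(2) by blast

definition special_gap :: "nat set \<Rightarrow> nat \<Rightarrow> bool" where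
  "special_gap S g \<longleftrightarrow> g \<notin> S \<and> g + g \<in> S \<and> (\<forall>s\<in>S. 0 < s \<longrightarrow> g + s \<in> S)"

lemma ns_insert_special_gap:
  assumes ns: "numerical_semigroup S" and g: "special_gap S g"
  shows "numerical_semigroup (insert g S)"
proof -
  have "x + y \<in> insert g S" if "x \<in> insert g S" "y \<in> insert g S" for x y
    using that ns g by (cases "x = 0"; cases "y = 0")
      (auto simp: numerical_semigroup_def special_gap_def add.commute)
  moreover have "finite (UNIV - insert g S)"
    using ns_finite_gaps[OF ns] by (rule finite_subset[rotated]) auto
  ultimately show ?thesis using ns_zero[OF ns] by (simp add: numerical_semigroup_def)
qed

text \<open>If S is properly contained in a numerical semigroup T, the largest element of T - S
  is a special gap of S.\<close>
lemma special_gap_of_superset: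
  assumes nsS: "numerical_semigroup S" and nsT: "numerical_semigroup T" and sub: "S \<subset> T"
  shows "\<exists>g \<in> T - S. special_gap S g"
proof -
  have fin: "finite (T - S)"
    using ns_finite_gaps[OF nsS] by (rule finite_subset[rotated]) auto
  define g where "g = Max (T - S)"
  have g: "g \<in> T - S" unfolding g_def using Max_in[OF fin] sub by auto
  have above: "x \<in> S" if "x \<in> T" "g < x" for x
    using Max_ge[OF fin, of x] that unfolding g_def by (cases "x \<in> S") auto
  have "0 < g" using g ns_zero[OF nsS] by (cases g) auto
  then have "special_gap S g"
    unfolding special_gap_def using g above ns_add[OF nsT] sub by auto
  with g show ?thesis by blast
qed

lemma irreducible_iff_unique_special_gap:
  assumes ns: "numerical_semigroup S"
  shows "irreducible_ns S \<longleftrightarrow> (\<forall>g h. special_gap S g \<longrightarrow> special_gap S h \<longrightarrow> g = h)"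
proof
  assume irr: "irreducible_ns S"
  show "\<forall>g h. special_gap S g \<longrightarrow> special_gap S h \<longrightarrow> g = h"
  proof (intro allI impI, rule ccontr)
    fix g h assume g: "special_gap S g" and h: "special_gap S h" and "g \<noteq> h"
    then have "S = insert g S \<inter> insert h S" "S \<subset> insert g S" "S \<subset> insert h S"
      by (auto simp: special_gap_def)
    then show False
      using irr ns_insert_special_gap[OF ns g] ns_insert_special_gap[OF ns h]
      unfolding irreducible_ns_def by blast
  qed
next
  assume unique: "\<forall>g h. special_gap S g \<longrightarrow> special_gap S h \<longrightarrow> g = h"
  show "irreducible_ns S"
    unfolding irreducible_ns_def
  proof (intro conjI ns notI)
    assume "\<exists>S1 S2. numerical_semigroup S1 \<and> numerical_semigroup S2 \<and>
              S \<subset> S1 \<and> S \<subset> S2 \<and> S = S1 \<inter> S2"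
    then obtain S1 S2 where "numerical_semigroup S1" "numerical_semigroup S2"
      "S \<subset> S1" "S \<subset> S2" and S: "S = S1 \<inter> S2" by blast
    then obtain g1 g2 where "g1 \<in> S1 - S" "g2 \<in> S2 - S" "special_gap S g1" "special_gap S g2"
      using special_gap_of_superset[OF ns] by meson
    with unique S show False by auto
  qed
qed

section \<open>The reflection property\<close>

definition reflective :: "nat \<Rightarrow> nat set \<Rightarrow> bool" where
  "reflective F S \<longleftrightarrow> numerical_semigroup S \<and> F \<notin> S \<and> (\<forall>x>F. x \<in> S)
     \<and> (\<forall>x. x \<notin> S \<and> x \<noteq> F \<and> 2 * x \<noteq> F \<longrightarrow> F - x \<in> S)"

lemma reflective_gap_le: "reflective F S \<Longrightarrow> x \<notin> S \<Longrightarrow> x \<le> F"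
  unfolding reflective_def using leI by blast

lemma reflective_frobenius:
  assumes "reflective F S"
  shows "frobenius S = F"
  unfolding frobenius_def
  by (rule Max_eqI) (use assms reflective_gap_le[OF assms] in \<open>auto simp: reflective_def
        numerical_semigroup_def\<close>)

text \<open>Under the reflection property F is the only special gap, hence S is irreducible.\<close>
lemma reflective_irreducible:
  assumes R: "reflective F S"
  shows "irreducible_ns S"
proof -
  have ns: "numerical_semigroup S" using R by (simp add: reflective_def)
  have "g = F" if g: "special_gap S g" for g
  proof (rule ccontr)
    assume "g \<noteq> F"
    have "g \<le> F" using reflective_gap_le[OF R] g by (auto simp: special_gap_def)
    with \<open>g \<noteq> F\<close> have gF: "g < F" by simp
    have "2 * g \<noteq> F" using g R by (auto simp: special_gap_def reflective_def mult_2)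
    then have "F - g \<in> S" using g \<open>g \<noteq> F\<close> R by (auto simp: special_gap_def reflective_def)
    then have "g + (F - g) \<in> S" using g gF by (auto simp: special_gap_def)
    with gF R show False by (auto simp: reflective_def)
  qed
  then show ?thesis using irreducible_iff_unique_special_gap[OF ns] by blast
qed

text \<open>Conversely an irreducible semigroup with Frobenius number F is reflective: a largest
  unreflected gap would be a special gap different from the special gap F.\<close>
lemma irreducible_reflective:
  assumes irr: "irreducible_ns S" and FS: "F \<notin> S" and frob: "frobenius S = F"
  shows "reflective F S"
proof -
  have ns: "numerical_semigroup S" using irr by (simp add: irreducible_ns_def)
  have le: "x \<le> F" if "x \<notin> S" for x using gap_le_frobenius[OF ns that] frob by simp
  have above: "\<forall>x>F. x \<in> S" using le leD by blast
  have "0 < F" using FS ns_zero[OF ns] by (cases F) auto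
  then have specialF: "special_gap S F" using FS above by (auto simp: special_gap_def)
  have unique: "\<And>g. special_gap S g \<Longrightarrow> g = F"
    using specialF irr irreducible_iff_unique_special_gap[OF ns] by blast
  have "F - x \<in> S" if x: "x \<notin> S" "x \<noteq> F" "2 * x \<noteq> F" for x
  proof (rule ccontr)
    assume "F - x \<notin> S"
    define A where "A = {h. h \<notin> S \<and> h \<noteq> F \<and> 2 * h \<noteq> F \<and> F - h \<notin> S}"
    have finA: "finite A" using ns_finite_gaps[OF ns] by (rule finite_subset[rotated]) (auto simp: A_def)
    define h where "h = Max A"
    have hA: "h \<in> A" unfolding h_def using Max_in[OF finA] x \<open>F - x \<notin> S\<close> by (auto simp: A_def)
    have hmax: "y \<le> h" if "y \<in> A" for y using Max_ge[OF finA that] h_def by simp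
    have hF: "h < F" using hA le by (auto simp: A_def le_less)
    have "h \<notin> S" using hA by (simp add: A_def)
    then have "h \<noteq> 0" using ns_zero[OF ns] by (intro notI) simp
    then have "F - h \<in> A" using hA hF by (auto simp: A_def)
    then have h2: "F < 2 * h" using hmax hA by (fastforce simp: A_def)
    have "h + s \<in> S" if s: "s \<in> S" "0 < s" for s
    proof (rule ccontr)
      assume hs: "h + s \<notin> S"
      have "F - (h + s) \<notin> S"
      proof
        assume "F - (h + s) \<in> S"
        then have "F - (h + s) + s \<in> S" using ns_add[OF ns] s by blast
        moreover have "F - (h + s) + s = F - h" using le[OF hs] by auto
        ultimately show False using hA by (auto simp: A_def)
      qed
      moreover have "h + s \<noteq> F" using s hA by (auto simp: A_def)
      moreover have "2 * (h + s) \<noteq> F" using h2 by auto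
      ultimately have "h + s \<in> A" using hs by (simp add: A_def)
      then show False using hmax[of "h + s"] s by auto
    qed
    then have "special_gap S h" using hA h2 above by (auto simp: special_gap_def A_def)
    with unique hF show False by auto
  qed
  then show ?thesis using ns FS above by (simp add: reflective_def)
qed

section \<open>One exchange step\<close>

definition small :: "nat \<Rightarrow> nat set \<Rightarrow> nat set" where
  "small F S = {s \<in> S. 2 * s < F}"

lemma finite_small: "finite (small F S)"
  by (rule finite_subset[of _ "{..<F}"]) (auto simp: small_def)

lemma reflective_zero_small:
  assumes "reflective F S" "0 < F"
  shows "0 \<in> small F S"
proof -
  have "numerical_semigroup S" using assms(1) by (simp add: reflective_def)
  then show ?thesis using ns_zero assms(2) by (simp add: small_def)
qed

text \<open>A reflective semigroup contains F + 1, so its multiplicity is a genuine least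
  positive element.\<close>
lemma reflective_multiplicity:
  assumes "reflective F S"
  shows "multiplicity S \<in> S" "0 < multiplicity S"
    and "\<And>s. s \<in> S \<Longrightarrow> 0 < s \<Longrightarrow> multiplicity S \<le> s"
proof -
  have "F + 1 \<in> S" using assms by (simp add: reflective_def)
  then show "multiplicity S \<in> S" "0 < multiplicity S" using multiplicity_least(1,2) by simp_all
  show "\<And>s. s \<in> S \<Longrightarrow> 0 < s \<Longrightarrow> multiplicity S \<le> s" by (rule multiplicity_least(3))
qed

lemma small_multiplicity_iff:
  assumes R: "reflective F S" and F: "0 < F"
  shows "2 * multiplicity S < F \<longleftrightarrow> small F S \<noteq> {0}"
proof
  assume "2 * multiplicity S < F"
  then have "multiplicity S \<in> small F S"
    using reflective_multiplicity(1)[OF R] by (simp add: small_def)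
  then show "small F S \<noteq> {0}" using reflective_multiplicity(2)[OF R] by (metis less_irrefl singletonD)
next
  assume "small F S \<noteq> {0}"
  moreover have "0 \<in> small F S" using reflective_zero_small[OF R F] .
  ultimately obtain s where "s \<in> small F S" "s \<noteq> 0" by auto
  then have "s \<in> S" "2 * s < F" "0 < s" by (simp_all add: small_def)
  moreover have "multiplicity S \<le> s" using reflective_multiplicity(3)[OF R] calculation by blast
  ultimately show "2 * multiplicity S < F" by linarith
qed

text \<open>Removing a small multiplicity m and adjoining F - m keeps a numerical semigroup:
  nonzero elements other than m exceed m, so their sums with F - m exceed F.\<close>
lemma exchange_numerical_semigroup:
  assumes R: "reflective F S" and m: "m = multiplicity S" and lt: "2 * m < F"
  shows "numerical_semigroup ((S - {m}) \<union> {F - m})"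
proof -
  let ?T = "(S - {m}) \<union> {F - m}"
  have ns: "numerical_semigroup S" and above: "\<forall>x>F. x \<in> S" using R by (auto simp: reflective_def)
  have mle: "\<And>s. s \<in> S \<Longrightarrow> 0 < s \<Longrightarrow> m \<le> s" "0 < m" using reflective_multiplicity[OF R] m by auto
  have SS: "a + b \<in> ?T" if "a \<in> S - {m}" "b \<in> S - {m}" for a b
  proof -
    have "a + b \<noteq> m" using that mle by (cases "a = 0"; cases "b = 0") fastforce+
    then show ?thesis using ns_add[OF ns] that by auto
  qed
  have ST: "a + (F - m) \<in> ?T" if "a \<in> S - {m}" for a
  proof (cases "a = 0")
    case False
    then have "m < a" using mle(1)[of a] that by force
    then show ?thesis using above lt by auto
  qed simp
  have TT: "(F - m) + (F - m) \<in> ?T" using above lt by auto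
  have "x + y \<in> ?T" if "x \<in> ?T" "y \<in> ?T" for x y
    using that SS ST[of x] ST[of y] TT by (auto simp: add.commute)
  moreover have "finite (UNIV - ?T)"
  proof (rule finite_subset)
    show "UNIV - ?T \<subseteq> insert m (UNIV - S)" by auto
  qed (simp add: ns_finite_gaps[OF ns])
  ultimately show ?thesis using ns_zero[OF ns] mle(2) by (auto simp: numerical_semigroup_def)
qed

text \<open>The exchange step preserves the reflection property: the only new gap is m, whose
  reflection F - m was added.\<close>
lemma exchange_reflective:
  assumes R: "reflective F S" and m: "m = multiplicity S" and lt: "2 * m < F"
  shows "reflective F ((S - {m}) \<union> {F - m})"
proof -
  let ?T = "(S - {m}) \<union> {F - m}"
  have "F - x \<in> ?T" if x: "x \<notin> ?T" "x \<noteq> F" "2 * x \<noteq> F" for x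
  proof (cases "x = m")
    case False
    then have "x \<notin> S" "x \<noteq> F - m" using x by auto
    then have "F - x \<in> S" "F - x \<noteq> m"
      using R x reflective_gap_le[OF R] by (auto simp: reflective_def)
    then show ?thesis by simp
  qed simp
  moreover have "F \<notin> ?T" "\<forall>x>F. x \<in> ?T"
    using R lt reflective_multiplicity(2)[OF R] m by (auto simp: reflective_def)
  ultimately show ?thesis
    using exchange_numerical_semigroup[OF assms] by (simp add: reflective_def)
qed

lemma exchange_small:
  assumes "reflective F S" "m = multiplicity S" "2 * m < F"
  shows "card (small F ((S - {m}) \<union> {F - m})) = card (small F S) - 1"
proof -
  have "small F ((S - {m}) \<union> {F - m}) = small F S - {m}" using assms(3) by (auto simp: small_def)
  moreover have "m \<in> small F S" using reflective_multiplicity(1)[OF assms(1)] assms by (simp add: small_def)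
  ultimately show ?thesis using finite_small by simp
qed

text \<open>A reflective semigroup whose only small element is 0 is C(F): every gap above F/2
  other than F would reflect to a nonzero small element.\<close>
lemma reflective_small_zero_C_set:
  assumes R: "reflective F S" and only0: "small F S = {0}"
  shows "S = C_set F"
proof (rule set_eqI)
  fix z
  have ns: "numerical_semigroup S" and FS: "F \<notin> S" using R by (auto simp: reflective_def)
  have nonsmall: "s \<in> S \<Longrightarrow> 2 * s < F \<Longrightarrow> s = 0" for s using only0 by (auto simp: small_def)
  show "z \<in> S \<longleftrightarrow> z \<in> C_set F"
  proof
    assume z: "z \<in> S"
    have "2 * z \<noteq> F" using ns_add[OF ns z z] FS by (auto simp: mult_2)
    then show "z \<in> C_set F" using z FS nonsmall[OF z] by (auto simp: C_set_def)
  next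
    assume z: "z \<in> C_set F"
    show "z \<in> S"
    proof (rule ccontr)
      assume zS: "z \<notin> S"
      then have "z \<noteq> 0" "F + 1 \<le> 2 * z" "z \<noteq> F" using ns_zero[OF ns] z by (auto simp: C_set_def)
      moreover have "z \<le> F" using reflective_gap_le[OF R zS] .
      moreover have "F - z \<in> S" using R zS calculation by (auto simp: reflective_def)
      moreover have "2 * (F - z) < F" "F - z \<noteq> 0" using calculation by auto
      ultimately show False using nonsmall[of "F - z"] by simp
    qed
  qed
qed

section \<open>The sequence\<close>

lemma seqS_reflective:
  assumes "reflective F S"
  shows "reflective F (seqS F S n)"
  by (induction n) (use assms exchange_reflective in auto)

lemma card_small_seqS:
  assumes R: "reflective F S" and F: "0 < F"
  shows "card (small F (seqS F S n)) = max 1 (card (small F S) - n)"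
proof (induction n)
  case 0
  have "small F S \<noteq> {}" using reflective_zero_small[OF R F] by blast
  then have "1 \<le> card (small F S)" using finite_small by (simp add: Suc_le_eq card_gt_0_iff)
  then show ?case by simp
next
  case (Suc n)
  let ?S = "seqS F S n"
  have R_n: "reflective F ?S" using seqS_reflective[OF R] .
  show ?case
  proof (cases "2 * multiplicity ?S < F")
    case True
    then have "small F ?S \<noteq> {0}" using small_multiplicity_iff[OF R_n F] by simp
    then have "card (small F ?S) \<noteq> 1"
      using reflective_zero_small[OF R_n F] by (auto simp: card_1_singleton_iff)
    then show ?thesis using Suc True exchange_small[OF R_n refl True] by simp
  next
    case False
    then have "card (small F ?S) = 1" using small_multiplicity_iff[OF R_n F] by simp
    then show ?thesis using Suc False by simp
  qed
qed

theorem mainTheorem4: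
  fixes F :: nat and S :: "nat set"
  assumes "0 < F"
    and "irreducible_ns S"
    and "F \<notin> S" and "frobenius S = F"
  defines "k \<equiv> card {s \<in> S. 2 * s < F} - 1"
  shows "(\<forall>n. irreducible_ns (seqS F S n) \<and> F \<notin> seqS F S n \<and> frobenius (seqS F S n) = F)
       \<and> (\<forall>n. seqS F S (k + n) = C_set F)"
proof -
  have R: "reflective F S" using irreducible_reflective assms(2-4) by blast
  have R_n: "reflective F (seqS F S n)" for n using seqS_reflective[OF R] .
  have "seqS F S (k + n) = C_set F" for n
  proof -
    have "card (small F (seqS F S (k + n))) = 1"
      using card_small_seqS[OF R assms(1)] by (simp add: k_def small_def)
    then have "small F (seqS F S (k + n)) = {0}"
      using reflective_zero_small[OF R_n[of "k + n"] assms(1)] by (auto simp: card_1_singleton_iff)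
    then show ?thesis using reflective_small_zero_C_set[OF R_n] by blast
  qed
  moreover have "irreducible_ns (seqS F S n) \<and> F \<notin> seqS F S n \<and> frobenius (seqS F S n) = F" for n
    using reflective_irreducible[OF R_n] reflective_frobenius[OF R_n] R_n
    by (auto simp: reflective_def)
  ultimately show ?thesis by blast
qed

end
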